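(* Let $M=\langle n_1,n_2,n_3\rangle$ be a numerical monoid of embedding dimension three with minimal generators $n_1<n_2<n_3$. Then: (1) There exists $x\in M$ with $L(x+n_1)\neq L(x)+1$ if and only if $L(\alpha(M)n_2)\neq L(\alpha(M)n_2-n_1)+1$. (2) There exists $x\in M$ with $\ell(x+n_3)\neq \ell(x)+1$ if and only if $\ell(\beta(M)n_2)\neq \ell(\beta(M)n_2-n_3)+1$.
   Context: $\mathbb{N}$ denotes the nonnegative integers. A numerical monoid is a submonoid of $\mathbb{N}$ with finite complement. For $x\in M$, $\mathsf{Z}(x)=\{(a_1,a_2,a_3)\in\mathbb{N}^3\mid a_1n_1+a_2n_2+a_3n_3=x\}$; the length of a factorization is $a_1+a_2+a_3$; $L(x)$ and $\ell(x)$ are the maximum and minimum factorization lengths of $x$. Define $\alpha(M)=\min\{b\in\mathbb{N}\mid bn_2-n_1\in M\}$ and $\beta(M)=\min\{b\in\mathbb{N}\mid bn_2-n_3\in M\}$. *)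

theory Defs
  imports Main
begin

definition mon3 :: "nat \<Rightarrow> nat \<Rightarrow> nat \<Rightarrow> nat set" where
  "mon3 n1 n2 n3 = {a1 * n1 + a2 * n2 + a3 * n3 | a1 a2 a3. True}"

definition numerical_monoid :: "nat set \<Rightarrow> bool" where
  "numerical_monoid M \<longleftrightarrow> 0 \<in> M \<and> (\<forall>x\<in>M. \<forall>y\<in>M. x + y \<in> M) \<and> finite (UNIV - M)"

definition minimal_gens3 :: "nat \<Rightarrow> nat \<Rightarrow> nat \<Rightarrow> bool" where
  "minimal_gens3 n1 n2 n3 \<longleftrightarrow>
     0 < n1 \<and> n1 < n2 \<and> n2 < n3 \<and>
     n1 \<notin> {a * n2 + b * n3 | a b. True} \<and>
     n2 \<notin> {a * n1 + b * n3 | a b. True} \<and>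
     n3 \<notin> {a * n1 + b * n2 | a b. True}"

definition Zf :: "nat \<Rightarrow> nat \<Rightarrow> nat \<Rightarrow> nat \<Rightarrow> (nat \<times> nat \<times> nat) set" where
  "Zf n1 n2 n3 x = {(a1, a2, a3). a1 * n1 + a2 * n2 + a3 * n3 = x}"

definition lengths :: "nat \<Rightarrow> nat \<Rightarrow> nat \<Rightarrow> nat \<Rightarrow> nat set" where
  "lengths n1 n2 n3 x = (\<lambda>(a1, a2, a3). a1 + a2 + a3) ` Zf n1 n2 n3 x"

definition Lmax :: "nat \<Rightarrow> nat \<Rightarrow> nat \<Rightarrow> nat \<Rightarrow> nat" where
  "Lmax n1 n2 n3 x = Max (lengths n1 n2 n3 x)"

definition lmin :: "nat \<Rightarrow> nat \<Rightarrow> nat \<Rightarrow> nat \<Rightarrow> nat" where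
  "lmin n1 n2 n3 x = Min (lengths n1 n2 n3 x)"

text \<open>alpha(M) = min { b | b n2 - n1 \<in> M }, beta(M) = min { b | b n2 - n3 \<in> M };
  the differences are integers and membership in M \<subseteq> N forces them to be
  nonnegative.\<close>
definition alphaM :: "nat \<Rightarrow> nat \<Rightarrow> nat \<Rightarrow> nat" where
  "alphaM n1 n2 n3 = (LEAST b. \<exists>m \<in> mon3 n1 n2 n3. int b * int n2 - int n1 = int m)"

definition betaM :: "nat \<Rightarrow> nat \<Rightarrow> nat \<Rightarrow> nat" where
  "betaM n1 n2 n3 = (LEAST b. \<exists>m \<in> mon3 n1 n2 n3. int b * int n2 - int n3 = int m)"

end

theory Submission
  imports Defs
begin

text \<open>
  Maximal length is superadditive, so L(x + n1) \<ge> L(x) + 1 always. Take a factorization of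
  x + n1 of maximal length. If it uses n1, removing one copy gives L(x + n1) \<le> L(x) + 1.
  Otherwise it is a combination of n2 and n3 at least two longer than a maximal factorization
  of x plus one copy of n1; since n1 < n2 < n3 this forces it to contain at least \<alpha> copies of n2.
  Trading \<alpha> n2 for n1 plus a maximal factorization of \<alpha> n2 - n1 costs only one unit of length
  when L(\<alpha> n2) = L(\<alpha> n2 - n1) + 1, which yields a factorization of x of length L(x + n1) - 1.
  Conversely, x = \<alpha> n2 - n1 is itself a witness. Part (2) is the same argument for minimal
  lengths, with n3 in place of n1 and \<beta> in place of \<alpha>.
\<close>

lemma mon3_iff: "x \<in> mon3 n1 n2 n3 \<longleftrightarrow> (\<exists>a1 a2 a3. a1 * n1 + a2 * n2 + a3 * n3 = x)"
  by (auto simp: mon3_def)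

lemma int_mult_diff_eq_iff: "int b * int n - int y = int m \<longleftrightarrow> b * n = y + m"
  by (metis add_diff_cancel_left' diff_add_cancel of_nat_add of_nat_eq_iff of_nat_mult)

lemma alphaM_eq: "alphaM n1 n2 n3 = (LEAST b. \<exists>m \<in> mon3 n1 n2 n3. b * n2 = n1 + m)"
  by (simp add: alphaM_def int_mult_diff_eq_iff)

lemma betaM_eq: "betaM n1 n2 n3 = (LEAST b. \<exists>m \<in> mon3 n1 n2 n3. b * n2 = n3 + m)"
  by (simp add: betaM_def int_mult_diff_eq_iff)

lemma cofinite_ex_mult_eq_add:
  fixes M :: "nat set"
  assumes "finite (UNIV - M)" and "0 < n"
  shows "\<exists>b. \<exists>m \<in> M. b * n = y + m"
proof -
  obtain N where "\<forall>z \<in> UNIV - M. z < N"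
    using assms(1) finite_nat_set_iff_bounded by blast
  then have N: "z \<in> M" if "N \<le> z" for z
    using that not_le by blast
  have large: "y + N \<le> (y + N) * n"
    using assms(2) by simp
  have "(y + N) * n - y \<in> M"
    by (rule N) (use large in linarith)
  moreover have "(y + N) * n = y + ((y + N) * n - y)"
    using large by linarith
  ultimately show ?thesis by blast
qed

lemma alphaM_spec:
  assumes "numerical_monoid (mon3 n1 n2 n3)" and "0 < n2"
  obtains m where "m \<in> mon3 n1 n2 n3" and "alphaM n1 n2 n3 * n2 = n1 + m"
proof -
  have "\<exists>b. \<exists>m \<in> mon3 n1 n2 n3. b * n2 = n1 + m"
    using assms cofinite_ex_mult_eq_add unfolding numerical_monoid_def by blast
  then have "\<exists>m \<in> mon3 n1 n2 n3. alphaM n1 n2 n3 * n2 = n1 + m"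
    unfolding alphaM_eq by (rule LeastI_ex)
  then show ?thesis
    using that by blast
qed

lemma betaM_spec:
  assumes "numerical_monoid (mon3 n1 n2 n3)" and "0 < n2"
  obtains m where "m \<in> mon3 n1 n2 n3" and "betaM n1 n2 n3 * n2 = n3 + m"
proof -
  have "\<exists>b. \<exists>m \<in> mon3 n1 n2 n3. b * n2 = n3 + m"
    using assms cofinite_ex_mult_eq_add unfolding numerical_monoid_def by blast
  then have "\<exists>m \<in> mon3 n1 n2 n3. betaM n1 n2 n3 * n2 = n3 + m"
    unfolding betaM_eq by (rule LeastI_ex)
  then show ?thesis
    using that by blast
qed

lemma alphaM_le: "m \<in> mon3 n1 n2 n3 \<Longrightarrow> k * n2 = n1 + m \<Longrightarrow> alphaM n1 n2 n3 \<le> k"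
  unfolding alphaM_eq by (blast intro: Least_le)

lemma betaM_le: "m \<in> mon3 n1 n2 n3 \<Longrightarrow> k * n2 = n3 + m \<Longrightarrow> betaM n1 n2 n3 \<le> k"
  unfolding betaM_eq by (blast intro: Least_le)

text \<open>
  If b3 \<ge> c3, cancelling c3 n3 leaves a left side of at least (b2 + b3 - c3) n2 against a right
  side below (c1 + c2 + 1) n2. So b3 < c3, and cancelling b3 n3 and c2 n2 gives the multiple
  (b2 - c2) n2 of n2.
\<close>
lemma ex_mult_n2_eq_n1_add_mon3:
  fixes n1 n2 n3 :: nat
  assumes "n1 < n2" and "n2 < n3"
    and eq: "b2 * n2 + b3 * n3 = (c1 + 1) * n1 + c2 * n2 + c3 * n3"
    and longer: "c1 + c2 + c3 + 2 \<le> b2 + b3"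
  obtains k m where "k \<le> b2" and "m \<in> mon3 n1 n2 n3" and "k * n2 = n1 + m"
proof -
  have "b3 < c3"
  proof (rule ccontr)
    assume "\<not> b3 < c3"
    then have eq': "b2 * n2 + (b3 - c3) * n3 = (c1 + 1) * n1 + c2 * n2"
      using eq by (simp add: diff_mult_distrib)
    have "(c1 + 1) * n1 + c2 * n2 < (c1 + 1) * n2 + c2 * n2"
      using assms(1) by (intro add_strict_right_mono mult_strict_left_mono) simp_all
    also have "\<dots> = (c1 + 1 + c2) * n2"
      by (simp add: distrib_right)
    also have "\<dots> \<le> (b2 + (b3 - c3)) * n2"
      using longer \<open>\<not> b3 < c3\<close> by (intro mult_right_mono) simp_all
    also have "\<dots> \<le> b2 * n2 + (b3 - c3) * n3"
      using assms(2) by (simp add: distrib_right)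
    finally show False
      using eq' by simp
  qed
  then have eq': "b2 * n2 = (c1 + 1) * n1 + c2 * n2 + (c3 - b3) * n3"
    using eq by (simp add: diff_mult_distrib)
  then have "c2 * n2 \<le> b2 * n2"
    by linarith
  then have "c2 \<le> b2"
    using assms by simp
  then have "(b2 - c2) * n2 = n1 + (c1 * n1 + 0 * n2 + (c3 - b3) * n3)"
    using eq' by (simp add: diff_mult_distrib)
  moreover have "c1 * n1 + 0 * n2 + (c3 - b3) * n3 \<in> mon3 n1 n2 n3"
    unfolding mon3_iff by blast
  ultimately show ?thesis
    using that[of "b2 - c2"] by simp
qed

lemma ex_mult_n2_eq_n3_add_mon3:
  fixes n1 n2 n3 :: nat
  assumes "n1 < n2" and "n2 < n3"
    and eq: "b1 * n1 + b2 * n2 = c1 * n1 + c2 * n2 + (c3 + 1) * n3"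
    and not_longer: "b1 + b2 \<le> c1 + c2 + c3"
  obtains k m where "k \<le> b2" and "m \<in> mon3 n1 n2 n3" and "k * n2 = n3 + m"
proof -
  have "b1 < c1"
  proof (rule ccontr)
    assume "\<not> b1 < c1"
    then have eq': "(b1 - c1) * n1 + b2 * n2 = c2 * n2 + (c3 + 1) * n3"
      using eq by (simp add: diff_mult_distrib)
    have "(b1 - c1) * n1 + b2 * n2 \<le> (b1 - c1 + b2) * n2"
      using assms(1) by (simp add: distrib_right)
    also have "\<dots> \<le> (c2 + c3) * n2"
      using not_longer \<open>\<not> b1 < c1\<close> by (intro mult_right_mono) simp_all
    also have "\<dots> < c2 * n2 + (c3 + 1) * n3"
      by (simp add: distrib_right) (use assms(2) mult_le_mono2[of n2 n3 c3] in linarith)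
    finally show False
      using eq' by simp
  qed
  then have "c1 * n1 = (c1 - b1) * n1 + b1 * n1"
    by (simp add: add_mult_distrib[symmetric])
  then have eq': "b2 * n2 = (c1 - b1) * n1 + c2 * n2 + (c3 + 1) * n3"
    using eq by linarith
  then have "c2 * n2 \<le> b2 * n2"
    by linarith
  then have "c2 \<le> b2"
    using assms by simp
  then have "(b2 - c2) * n2 = n3 + ((c1 - b1) * n1 + 0 * n2 + c3 * n3)"
    using eq' by (simp add: diff_mult_distrib)
  moreover have "(c1 - b1) * n1 + 0 * n2 + c3 * n3 \<in> mon3 n1 n2 n3"
    unfolding mon3_iff by blast
  ultimately show ?thesis
    using that[of "b2 - c2"] by simp
qed

lemma mon3_add: "u \<in> mon3 n1 n2 n3 \<Longrightarrow> v \<in> mon3 n1 n2 n3 \<Longrightarrow> u + v \<in> mon3 n1 n2 n3"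
proof -
  assume "u \<in> mon3 n1 n2 n3" "v \<in> mon3 n1 n2 n3"
  then obtain a1 a2 a3 b1 b2 b3 where "a1 * n1 + a2 * n2 + a3 * n3 = u" "b1 * n1 + b2 * n2 + b3 * n3 = v"
    unfolding mon3_iff by blast
  then have "(a1 + b1) * n1 + (a2 + b2) * n2 + (a3 + b3) * n3 = u + v"
    by (simp add: algebra_simps)
  then show ?thesis
    unfolding mon3_iff by blast
qed

lemma generators_in_mon3: "n1 \<in> mon3 n1 n2 n3" "n2 \<in> mon3 n1 n2 n3" "n3 \<in> mon3 n1 n2 n3"
  unfolding mon3_iff by (rule exI[of _ 1] exI[of _ 0], simp)+

locale positive_generators =
  fixes n1 n2 n3 :: nat
  assumes n1_pos: "0 < n1" and n2_pos: "0 < n2" and n3_pos: "0 < n3"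
begin

lemma finite_lengths: "finite (lengths n1 n2 n3 x)"
proof -
  have "Zf n1 n2 n3 x \<subseteq> {..x} \<times> {..x} \<times> {..x}"
  proof
    fix t assume "t \<in> Zf n1 n2 n3 x"
    then obtain a1 a2 a3 where t: "t = (a1, a2, a3)" and "a1 * n1 + a2 * n2 + a3 * n3 = x"
      by (auto simp: Zf_def)
    moreover have "a1 \<le> a1 * n1" "a2 \<le> a2 * n2" "a3 \<le> a3 * n3"
      using n1_pos n2_pos n3_pos by simp_all
    ultimately have "a1 \<le> x" "a2 \<le> x" "a3 \<le> x"
      by linarith+
    then show "t \<in> {..x} \<times> {..x} \<times> {..x}"
      using t by simp
  qed
  then have "finite (Zf n1 n2 n3 x)"
    by (rule finite_subset) simp
  then show ?thesis
    unfolding lengths_def by simp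
qed

lemma length_in_lengths: "a1 * n1 + a2 * n2 + a3 * n3 = x \<Longrightarrow> a1 + a2 + a3 \<in> lengths n1 n2 n3 x"
  unfolding lengths_def Zf_def by (rule image_eqI[of _ _ "(a1, a2, a3)"]) simp_all

lemma Lmax_ge: "a1 * n1 + a2 * n2 + a3 * n3 = x \<Longrightarrow> a1 + a2 + a3 \<le> Lmax n1 n2 n3 x"
  unfolding Lmax_def using finite_lengths by (simp add: length_in_lengths)

lemma lmin_le: "a1 * n1 + a2 * n2 + a3 * n3 = x \<Longrightarrow> lmin n1 n2 n3 x \<le> a1 + a2 + a3"
  unfolding lmin_def using finite_lengths by (simp add: length_in_lengths)

lemma Lmax_attained:
  assumes "x \<in> mon3 n1 n2 n3"
  obtains a1 a2 a3 where "a1 * n1 + a2 * n2 + a3 * n3 = x" and "a1 + a2 + a3 = Lmax n1 n2 n3 x"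
proof -
  have "lengths n1 n2 n3 x \<noteq> {}"
    using assms length_in_lengths unfolding mon3_iff by blast
  then have "Lmax n1 n2 n3 x \<in> lengths n1 n2 n3 x"
    unfolding Lmax_def using finite_lengths by (rule Max_in[rotated])
  then show ?thesis
    using that unfolding lengths_def Zf_def by auto
qed

lemma lmin_attained:
  assumes "x \<in> mon3 n1 n2 n3"
  obtains a1 a2 a3 where "a1 * n1 + a2 * n2 + a3 * n3 = x" and "a1 + a2 + a3 = lmin n1 n2 n3 x"
proof -
  have "lengths n1 n2 n3 x \<noteq> {}"
    using assms length_in_lengths unfolding mon3_iff by blast
  then have "lmin n1 n2 n3 x \<in> lengths n1 n2 n3 x"
    unfolding lmin_def using finite_lengths by (rule Min_in[rotated])
  then show ?thesis
    using that unfolding lengths_def Zf_def by auto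
qed

lemma Lmax_superadditive:
  assumes "u \<in> mon3 n1 n2 n3" and "v \<in> mon3 n1 n2 n3"
  shows "Lmax n1 n2 n3 u + Lmax n1 n2 n3 v \<le> Lmax n1 n2 n3 (u + v)"
proof -
  obtain a1 a2 a3 where a: "a1 * n1 + a2 * n2 + a3 * n3 = u" "a1 + a2 + a3 = Lmax n1 n2 n3 u"
    using Lmax_attained[OF assms(1)] .
  obtain b1 b2 b3 where b: "b1 * n1 + b2 * n2 + b3 * n3 = v" "b1 + b2 + b3 = Lmax n1 n2 n3 v"
    using Lmax_attained[OF assms(2)] .
  have "(a1 + b1) * n1 + (a2 + b2) * n2 + (a3 + b3) * n3 = u + v"
    using a(1) b(1) by (simp add: algebra_simps)
  then have "(a1 + b1) + (a2 + b2) + (a3 + b3) \<le> Lmax n1 n2 n3 (u + v)"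
    by (rule Lmax_ge)
  then show ?thesis
    using a(2) b(2) by simp
qed

lemma lmin_subadditive:
  assumes "u \<in> mon3 n1 n2 n3" and "v \<in> mon3 n1 n2 n3"
  shows "lmin n1 n2 n3 (u + v) \<le> lmin n1 n2 n3 u + lmin n1 n2 n3 v"
proof -
  obtain a1 a2 a3 where a: "a1 * n1 + a2 * n2 + a3 * n3 = u" "a1 + a2 + a3 = lmin n1 n2 n3 u"
    using lmin_attained[OF assms(1)] .
  obtain b1 b2 b3 where b: "b1 * n1 + b2 * n2 + b3 * n3 = v" "b1 + b2 + b3 = lmin n1 n2 n3 v"
    using lmin_attained[OF assms(2)] .
  have "(a1 + b1) * n1 + (a2 + b2) * n2 + (a3 + b3) * n3 = u + v"
    using a(1) b(1) by (simp add: algebra_simps)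
  then have "lmin n1 n2 n3 (u + v) \<le> (a1 + b1) + (a2 + b2) + (a3 + b3)"
    by (rule lmin_le)
  then show ?thesis
    using a(2) b(2) by simp
qed

lemma Lmax_add_n1_ge:
  assumes "x \<in> mon3 n1 n2 n3"
  shows "Lmax n1 n2 n3 x + 1 \<le> Lmax n1 n2 n3 (x + n1)"
proof -
  have "1 + 0 + 0 \<le> Lmax n1 n2 n3 n1"
    by (rule Lmax_ge) simp
  then show ?thesis
    using Lmax_superadditive[OF assms generators_in_mon3(1)] by simp
qed

lemma lmin_add_n3_le:
  assumes "x \<in> mon3 n1 n2 n3"
  shows "lmin n1 n2 n3 (x + n3) \<le> lmin n1 n2 n3 x + 1"
proof -
  have "lmin n1 n2 n3 n3 \<le> 0 + 0 + 1"
    by (rule lmin_le) simp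
  then show ?thesis
    using lmin_subadditive[OF assms generators_in_mon3(3)] by simp
qed

lemma Lmax_bound_if_alphaM_le:
  assumes "numerical_monoid (mon3 n1 n2 n3)"
    and alpha: "Lmax n1 n2 n3 (alphaM n1 n2 n3 * n2) = Lmax n1 n2 n3 (alphaM n1 n2 n3 * n2 - n1) + 1"
    and "alphaM n1 n2 n3 \<le> b2" and b: "b2 * n2 + b3 * n3 = x + n1"
  shows "b2 + b3 \<le> Lmax n1 n2 n3 x + 1"
proof -
  let ?\<alpha> = "alphaM n1 n2 n3"
  obtain m where m: "m \<in> mon3 n1 n2 n3" "?\<alpha> * n2 = n1 + m"
    using alphaM_spec[OF assms(1) n2_pos] .
  have "b2 * n2 = (b2 - ?\<alpha>) * n2 + ?\<alpha> * n2"
    using \<open>?\<alpha> \<le> b2\<close> by (simp add: add_mult_distrib[symmetric])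
  then have x: "x = (0 * n1 + (b2 - ?\<alpha>) * n2 + b3 * n3) + m"
    using b m(2) by simp
  have "0 + ?\<alpha> + 0 \<le> Lmax n1 n2 n3 (?\<alpha> * n2)"
    by (rule Lmax_ge) simp
  then have "?\<alpha> \<le> Lmax n1 n2 n3 m + 1"
    using alpha m(2) by simp
  moreover have "0 + (b2 - ?\<alpha>) + b3 \<le> Lmax n1 n2 n3 (0 * n1 + (b2 - ?\<alpha>) * n2 + b3 * n3)"
    by (rule Lmax_ge) simp
  moreover have "0 * n1 + (b2 - ?\<alpha>) * n2 + b3 * n3 \<in> mon3 n1 n2 n3"
    unfolding mon3_iff by blast
  ultimately show ?thesis
    using Lmax_superadditive[OF _ m(1)] x \<open>?\<alpha> \<le> b2\<close> by fastforce
qed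

lemma lmin_bound_if_betaM_le:
  assumes "numerical_monoid (mon3 n1 n2 n3)"
    and beta: "lmin n1 n2 n3 (betaM n1 n2 n3 * n2) = lmin n1 n2 n3 (betaM n1 n2 n3 * n2 - n3) + 1"
    and "betaM n1 n2 n3 \<le> b2" and b: "b1 * n1 + b2 * n2 = x + n3"
  shows "lmin n1 n2 n3 x + 1 \<le> b1 + b2"
proof -
  let ?\<beta> = "betaM n1 n2 n3"
  obtain m where m: "m \<in> mon3 n1 n2 n3" "?\<beta> * n2 = n3 + m"
    using betaM_spec[OF assms(1) n2_pos] .
  have "b2 * n2 = (b2 - ?\<beta>) * n2 + ?\<beta> * n2"
    using \<open>?\<beta> \<le> b2\<close> by (simp add: add_mult_distrib[symmetric])
  then have x: "x = (b1 * n1 + (b2 - ?\<beta>) * n2 + 0 * n3) + m"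
    using b m(2) by simp
  have "lmin n1 n2 n3 (?\<beta> * n2) \<le> 0 + ?\<beta> + 0"
    by (rule lmin_le) simp
  then have "lmin n1 n2 n3 m + 1 \<le> ?\<beta>"
    using beta m(2) by simp
  moreover have "lmin n1 n2 n3 (b1 * n1 + (b2 - ?\<beta>) * n2 + 0 * n3) \<le> b1 + (b2 - ?\<beta>) + 0"
    by (rule lmin_le) simp
  moreover have "b1 * n1 + (b2 - ?\<beta>) * n2 + 0 * n3 \<in> mon3 n1 n2 n3"
    unfolding mon3_iff by blast
  ultimately show ?thesis
    using lmin_subadditive[of _ m] m(1) x \<open>?\<beta> \<le> b2\<close> by fastforce
qed

lemma Lmax_add_n1_eq:
  assumes "numerical_monoid (mon3 n1 n2 n3)" and "n1 < n2" and "n2 < n3"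
    and alpha: "Lmax n1 n2 n3 (alphaM n1 n2 n3 * n2) = Lmax n1 n2 n3 (alphaM n1 n2 n3 * n2 - n1) + 1"
    and x: "x \<in> mon3 n1 n2 n3"
  shows "Lmax n1 n2 n3 (x + n1) = Lmax n1 n2 n3 x + 1"
proof -
  have "x + n1 \<in> mon3 n1 n2 n3"
    using x generators_in_mon3(1) by (rule mon3_add)
  then obtain b1 b2 b3 where b: "b1 * n1 + b2 * n2 + b3 * n3 = x + n1" "b1 + b2 + b3 = Lmax n1 n2 n3 (x + n1)"
    by (rule Lmax_attained)
  obtain c1 c2 c3 where c: "c1 * n1 + c2 * n2 + c3 * n3 = x" "c1 + c2 + c3 = Lmax n1 n2 n3 x"
    using Lmax_attained[OF x] .
  have "b1 + b2 + b3 \<le> Lmax n1 n2 n3 x + 1"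
  proof (cases "b1 = 0")
    case False
    then have "(b1 - 1) * n1 + b2 * n2 + b3 * n3 = x"
      using b(1) by (cases b1) simp_all
    then have "(b1 - 1) + b2 + b3 \<le> Lmax n1 n2 n3 x"
      by (rule Lmax_ge)
    then show ?thesis
      using False by simp
  next
    case True
    show ?thesis
    proof (cases "c1 + c2 + c3 + 2 \<le> b2 + b3")
      case longer: True
      have "b2 * n2 + b3 * n3 = (c1 + 1) * n1 + c2 * n2 + c3 * n3"
        using b(1) c(1) \<open>b1 = 0\<close> by simp
      then obtain k m where "k \<le> b2" "m \<in> mon3 n1 n2 n3" "k * n2 = n1 + m"
        using ex_mult_n2_eq_n1_add_mon3 assms(2,3) longer by blast
      then have "alphaM n1 n2 n3 \<le> b2"
        using alphaM_le by fastforce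
      then show ?thesis
        using Lmax_bound_if_alphaM_le[OF assms(1) alpha] b(1) \<open>b1 = 0\<close> by simp
    next
      case False
      then show ?thesis
        using \<open>b1 = 0\<close> c(2) by simp
    qed
  qed
  then show ?thesis
    using Lmax_add_n1_ge[OF x] b(2) by simp
qed

lemma lmin_add_n3_eq:
  assumes "numerical_monoid (mon3 n1 n2 n3)" and "n1 < n2" and "n2 < n3"
    and beta: "lmin n1 n2 n3 (betaM n1 n2 n3 * n2) = lmin n1 n2 n3 (betaM n1 n2 n3 * n2 - n3) + 1"
    and x: "x \<in> mon3 n1 n2 n3"
  shows "lmin n1 n2 n3 (x + n3) = lmin n1 n2 n3 x + 1"
proof -
  have "x + n3 \<in> mon3 n1 n2 n3"
    using x generators_in_mon3(3) by (rule mon3_add)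
  then obtain b1 b2 b3 where b: "b1 * n1 + b2 * n2 + b3 * n3 = x + n3" "b1 + b2 + b3 = lmin n1 n2 n3 (x + n3)"
    by (rule lmin_attained)
  obtain c1 c2 c3 where c: "c1 * n1 + c2 * n2 + c3 * n3 = x" "c1 + c2 + c3 = lmin n1 n2 n3 x"
    using lmin_attained[OF x] .
  have "lmin n1 n2 n3 x + 1 \<le> b1 + b2 + b3"
  proof (cases "b3 = 0")
    case False
    then have "b1 * n1 + b2 * n2 + (b3 - 1) * n3 = x"
      using b(1) by (cases b3) simp_all
    then have "lmin n1 n2 n3 x \<le> b1 + b2 + (b3 - 1)"
      by (rule lmin_le)
    then show ?thesis
      using False by simp
  next
    case True
    show ?thesis
    proof (cases "b1 + b2 \<le> c1 + c2 + c3")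
      case not_longer: True
      have "b1 * n1 + b2 * n2 = c1 * n1 + c2 * n2 + (c3 + 1) * n3"
        using b(1) c(1) \<open>b3 = 0\<close> by simp
      then obtain k m where "k \<le> b2" "m \<in> mon3 n1 n2 n3" "k * n2 = n3 + m"
        using ex_mult_n2_eq_n3_add_mon3 assms(2,3) not_longer by blast
      then have "betaM n1 n2 n3 \<le> b2"
        using betaM_le by fastforce
      then show ?thesis
        using lmin_bound_if_betaM_le[OF assms(1) beta] b(1) \<open>b3 = 0\<close> by simp
    next
      case False
      then show ?thesis
        using \<open>b3 = 0\<close> c(2) by simp
    qed
  qed
  then show ?thesis
    using lmin_add_n3_le[OF x] b(2) by simp
qed

lemma Lmax_add_n1_criterion:
  assumes "numerical_monoid (mon3 n1 n2 n3)" and "n1 < n2" and "n2 < n3"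
  shows "(\<exists>x \<in> mon3 n1 n2 n3. Lmax n1 n2 n3 (x + n1) \<noteq> Lmax n1 n2 n3 x + 1)
           \<longleftrightarrow> Lmax n1 n2 n3 (alphaM n1 n2 n3 * n2) \<noteq> Lmax n1 n2 n3 (alphaM n1 n2 n3 * n2 - n1) + 1"
proof
  assume "\<exists>x \<in> mon3 n1 n2 n3. Lmax n1 n2 n3 (x + n1) \<noteq> Lmax n1 n2 n3 x + 1"
  then show "Lmax n1 n2 n3 (alphaM n1 n2 n3 * n2) \<noteq> Lmax n1 n2 n3 (alphaM n1 n2 n3 * n2 - n1) + 1"
    using Lmax_add_n1_eq[OF assms] by blast
next
  obtain m where m: "m \<in> mon3 n1 n2 n3" "alphaM n1 n2 n3 * n2 = n1 + m"
    using alphaM_spec[OF assms(1) n2_pos] .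
  assume "Lmax n1 n2 n3 (alphaM n1 n2 n3 * n2) \<noteq> Lmax n1 n2 n3 (alphaM n1 n2 n3 * n2 - n1) + 1"
  then have "Lmax n1 n2 n3 (m + n1) \<noteq> Lmax n1 n2 n3 m + 1"
    using m(2) by (simp add: add.commute)
  then show "\<exists>x \<in> mon3 n1 n2 n3. Lmax n1 n2 n3 (x + n1) \<noteq> Lmax n1 n2 n3 x + 1"
    using m(1) by blast
qed

lemma lmin_add_n3_criterion:
  assumes "numerical_monoid (mon3 n1 n2 n3)" and "n1 < n2" and "n2 < n3"
  shows "(\<exists>x \<in> mon3 n1 n2 n3. lmin n1 n2 n3 (x + n3) \<noteq> lmin n1 n2 n3 x + 1)
           \<longleftrightarrow> lmin n1 n2 n3 (betaM n1 n2 n3 * n2) \<noteq> lmin n1 n2 n3 (betaM n1 n2 n3 * n2 - n3) + 1"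
proof
  assume "\<exists>x \<in> mon3 n1 n2 n3. lmin n1 n2 n3 (x + n3) \<noteq> lmin n1 n2 n3 x + 1"
  then show "lmin n1 n2 n3 (betaM n1 n2 n3 * n2) \<noteq> lmin n1 n2 n3 (betaM n1 n2 n3 * n2 - n3) + 1"
    using lmin_add_n3_eq[OF assms] by blast
next
  obtain m where m: "m \<in> mon3 n1 n2 n3" "betaM n1 n2 n3 * n2 = n3 + m"
    using betaM_spec[OF assms(1) n2_pos] .
  assume "lmin n1 n2 n3 (betaM n1 n2 n3 * n2) \<noteq> lmin n1 n2 n3 (betaM n1 n2 n3 * n2 - n3) + 1"
  then have "lmin n1 n2 n3 (m + n3) \<noteq> lmin n1 n2 n3 m + 1"
    using m(2) by (simp add: add.commute)
  then show "\<exists>x \<in> mon3 n1 n2 n3. lmin n1 n2 n3 (x + n3) \<noteq> lmin n1 n2 n3 x + 1"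
    using m(1) by blast
qed

end

theorem mainTheorem5:
  fixes n1 n2 n3 :: nat
  assumes "numerical_monoid (mon3 n1 n2 n3)"
    and "minimal_gens3 n1 n2 n3"
  shows "((\<exists>x \<in> mon3 n1 n2 n3. Lmax n1 n2 n3 (x + n1) \<noteq> Lmax n1 n2 n3 x + 1)
            \<longleftrightarrow> Lmax n1 n2 n3 (alphaM n1 n2 n3 * n2)
                  \<noteq> Lmax n1 n2 n3 (alphaM n1 n2 n3 * n2 - n1) + 1)
       \<and> ((\<exists>x \<in> mon3 n1 n2 n3. lmin n1 n2 n3 (x + n3) \<noteq> lmin n1 n2 n3 x + 1)
            \<longleftrightarrow> lmin n1 n2 n3 (betaM n1 n2 n3 * n2)
                  \<noteq> lmin n1 n2 n3 (betaM n1 n2 n3 * n2 - n3) + 1)"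
proof -
  have order: "0 < n1" "n1 < n2" "n2 < n3"
    using assms(2) by (auto simp: minimal_gens3_def)
  then interpret positive_generators n1 n2 n3
    by unfold_locales simp_all
  show ?thesis
    using Lmax_add_n1_criterion[OF assms(1) order(2,3)] lmin_add_n3_criterion[OF assms(1) order(2,3)]
    by blast
qed

end
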